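(* Let $J$ be a real semi-simple Jordan algebra of dimension $n\ge2$ with unit $e$, let $\mathcal Y$ be the connected component of $e$ in the set of invertible elements, $\omega(y)=\sqrt{|\det P_y|}$ on $\mathcal Y$, and let $\gamma=-n^{-1}g$, where $g(x,y)=\mathrm{tr}\,L_{x\bullet y}$. Let $\Delta$ be the kernel of the 1-form $\zeta$ on $\mathcal Y$ given at $x$ by $\zeta(u)=-\gamma(u,x^{-1})$. Then the maximal integral manifolds of $\Delta$ are the level surfaces $\omega_c=\{x\in\mathcal Y:\omega(x)=c\}$, $c>0$.
   Context: Real Jordan algebra: commutative bilinear product with $x\bullet(x^2\bullet y)=x^2\bullet(x\bullet y)$; $L_xy=x\bullet y$; $P_x=2L_x^2-L_{x^2}$; $x$ invertible iff $\det P_x\ne0$, $x^{-1}=P_x^{-1}x$; semi-simple iff $g$ is non-degenerate (such algebras are unital; $-n^{-1}g$ is then a non-degenerate trace form with value $-1$ at $(e,e)$). *)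

theory Defs
  imports "HOL-Analysis.Analysis"
begin

text \<open>A real Jordan algebra of dimension n = CARD('n) is modelled as real^'n with a
  bilinear product mul.\<close>

definition jordan_algebra :: "(real^'n \<Rightarrow> real^'n \<Rightarrow> real^'n) \<Rightarrow> bool" where
  "jordan_algebra mul \<longleftrightarrow> bilinear mul \<and> (\<forall>x y. mul x y = mul y x) \<and>
     (\<forall>x y. mul x (mul (mul x x) y) = mul (mul x x) (mul x y))"

definition Lop :: "(real^'n \<Rightarrow> real^'n \<Rightarrow> real^'n) \<Rightarrow> real^'n \<Rightarrow> real^'n \<Rightarrow> real^'n" where
  "Lop mul x = (\<lambda>y. mul x y)"

definition Pop :: "(real^'n \<Rightarrow> real^'n \<Rightarrow> real^'n) \<Rightarrow> real^'n \<Rightarrow> real^'n \<Rightarrow> real^'n" where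
  "Pop mul x = (\<lambda>y. 2 *\<^sub>R Lop mul x (Lop mul x y) - Lop mul (mul x x) y)"

definition jinvertible :: "(real^'n \<Rightarrow> real^'n \<Rightarrow> real^'n) \<Rightarrow> real^'n \<Rightarrow> bool" where
  "jinvertible mul x \<longleftrightarrow> det (matrix (Pop mul x)) \<noteq> 0"

definition jinv :: "(real^'n \<Rightarrow> real^'n \<Rightarrow> real^'n) \<Rightarrow> real^'n \<Rightarrow> real^'n" where
  "jinv mul x = matrix_inv (matrix (Pop mul x)) *v x"

definition gform :: "(real^'n \<Rightarrow> real^'n \<Rightarrow> real^'n) \<Rightarrow> real^'n \<Rightarrow> real^'n \<Rightarrow> real" where
  "gform mul x y = trace (matrix (Lop mul (mul x y)))"

definition semisimple :: "(real^'n \<Rightarrow> real^'n \<Rightarrow> real^'n) \<Rightarrow> bool" where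
  "semisimple mul \<longleftrightarrow> (\<forall>x. (\<forall>y. gform mul x y = 0) \<longrightarrow> x = 0)"

definition gamma_form :: "(real^'n \<Rightarrow> real^'n \<Rightarrow> real^'n) \<Rightarrow> real^'n \<Rightarrow> real^'n \<Rightarrow> real" where
  "gamma_form mul x y = - (1 / real CARD('n)) * gform mul x y"

definition Ycomp :: "(real^'n \<Rightarrow> real^'n \<Rightarrow> real^'n) \<Rightarrow> real^'n \<Rightarrow> (real^'n) set" where
  "Ycomp mul e = connected_component_set {x. jinvertible mul x} e"

definition omega :: "(real^'n \<Rightarrow> real^'n \<Rightarrow> real^'n) \<Rightarrow> real^'n \<Rightarrow> real" where
  "omega mul y = sqrt \<bar>det (matrix (Pop mul y))\<bar>"

definition zeta :: "(real^'n \<Rightarrow> real^'n \<Rightarrow> real^'n) \<Rightarrow> real^'n \<Rightarrow> real^'n \<Rightarrow> real" where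
  "zeta mul x u = - gamma_form mul u (jinv mul x)"

definition Delta :: "(real^'n \<Rightarrow> real^'n \<Rightarrow> real^'n) \<Rightarrow> real^'n \<Rightarrow> (real^'n) set" where
  "Delta mul x = {u. zeta mul x u = 0}"

text \<open>Integral manifold of a codimension-one (hyperplane) distribution D on an ambient
  set M: a nonempty connected subset of M which is locally the regular zero set of a
  C^1 function whose differential at the point has kernel D p (embedded C^1 hypersurface
  with tangent space D p at each point p).\<close>
definition integral_manifold ::
  "('a::euclidean_space \<Rightarrow> 'a set) \<Rightarrow> 'a set \<Rightarrow> 'a set \<Rightarrow> bool" where
  "integral_manifold D M S \<longleftrightarrow> S \<noteq> {} \<and> connected S \<and> S \<subseteq> M \<and>
     (\<forall>p\<in>S. \<exists>U f f'. open U \<and> p \<in> U \<and> U \<subseteq> M \<and>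
        (\<forall>x\<in>U. (f has_derivative blinfun_apply (f' x)) (at x)) \<and>
        continuous_on U (f' :: 'a \<Rightarrow> 'a \<Rightarrow>\<^sub>L real) \<and>
        blinfun_apply (f' p) \<noteq> (\<lambda>u. 0) \<and>
        S \<inter> U = {x\<in>U. f x = 0} \<and>
        {u. blinfun_apply (f' p) u = 0} = D p)"

definition maximal_integral_manifold ::
  "('a::euclidean_space \<Rightarrow> 'a set) \<Rightarrow> 'a set \<Rightarrow> 'a set \<Rightarrow> bool" where
  "maximal_integral_manifold D M S \<longleftrightarrow> integral_manifold D M S \<and>
     (\<forall>S'. integral_manifold D M S' \<and> S \<subseteq> S' \<longrightarrow> S' = S)"

end

theory Submission
  imports Defs
begin

text \<open>Write \<open>Y\<close> for the component of \<open>e\<close>. Jacobi's formula together with the identity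
  \<open>{x z (P x y)} = P x {y x z}\<close> gives \<open>d(det P)\<^sub>x u = 2 det P\<^sub>x g(u, x\<inverse>)\<close>, so on \<open>Y\<close>, where
  \<open>det P > 0\<close>, the derivative of \<open>\<omega>\<close> is \<open>u \<mapsto> \<omega>(x) g(u, x\<inverse>)\<close>, a nonzero multiple of \<open>\<zeta>\<^sub>x\<close>
  (nonzero because \<open>g\<close> is non-degenerate and \<open>x\<inverse> \<noteq> 0\<close>). Hence \<open>\<Delta>\<close> is the kernel of \<open>d\<omega>\<close>.
  An integral manifold is locally a regular level set of some function, and straightening it by the
  inverse function theorem shows that \<open>\<omega>\<close> is locally constant on it; being connected, it lies in a
  level set of \<open>\<omega>\<close>. Conversely each level set is an integral manifold, connected because \<open>\<omega>\<close> is
  homogeneous of degree \<open>n\<close> and \<open>Y\<close> is a cone, so \<open>x \<mapsto> (c / \<omega> x)\<^bsup>1/n\<^esup> x\<close> maps \<open>Y\<close> onto it.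
  Since \<open>\<omega>(Y) = (0, \<infinity>)\<close>, the maximal integral manifolds are exactly the sets \<open>\<omega> = c\<close>, \<open>c > 0\<close>.\<close>

section \<open>Determinants and traces\<close>

lemma trace_matrix_eq_sum: "trace (matrix (f :: real^'n \<Rightarrow> real^'n)) = (\<Sum>i\<in>UNIV. f (axis i 1) $ i)"
  by (simp add: trace_def matrix_def)

lemma trace_matrix_comp_commute:
  fixes f g :: "real^'n \<Rightarrow> real^'n"
  assumes "linear f" "linear g"
  shows "trace (matrix (f \<circ> g)) = trace (matrix (g \<circ> f))"
  using matrix_compose[OF assms(2,1)] matrix_compose[OF assms] trace_mul_sym by metis

lemma matrix_inv_det_nz:
  fixes A :: "real^'n^'n"
  assumes "det A \<noteq> 0"
  shows "A ** matrix_inv A = mat 1" and "matrix_inv A ** A = mat 1"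
proof -
  have "\<exists>A'::real^'n^'n. A ** A' = mat 1 \<and> A' ** A = mat 1"
    using assms invertible_det_nz[of A] unfolding invertible_def by blast
  then have "A ** matrix_inv A = mat 1 \<and> matrix_inv A ** A = mat 1"
    unfolding matrix_inv_def by (rule someI_ex)
  then show "A ** matrix_inv A = mat 1" "matrix_inv A ** A = mat 1"
    by auto
qed

lemma prod_if_eq_remove:
  fixes f g :: "'n::finite \<Rightarrow> real"
  shows "(\<Prod>j\<in>UNIV. if j = k then f j else g j) = f k * (\<Prod>j\<in>UNIV-{k}. g j)"
proof -
  have "(\<Prod>j\<in>UNIV. if j = k then f j else g j)
      = (if k = k then f k else g k) * (\<Prod>j\<in>UNIV-{k}. if j = k then f j else g j)"
    by (rule prod.remove) auto
  also have "(\<Prod>j\<in>UNIV-{k}. if j = k then f j else g j) = (\<Prod>j\<in>UNIV-{k}. g j)"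
    by (rule prod.cong) auto
  finally show ?thesis
    by simp
qed

lemma det_has_derivative:
  fixes B B' :: "'a::real_normed_vector \<Rightarrow> real^'n^'n"
  assumes "\<And>i j. ((\<lambda>x. B x $ i $ j) has_derivative (\<lambda>u. B' u $ i $ j)) (at x)"
  shows "((\<lambda>x. det (B x)) has_derivative
     (\<lambda>u. \<Sum>k\<in>UNIV. det (\<chi> i j. if i = k then B' u $ i $ j else B x $ i $ j))) (at x)"
proof -
  have "((\<lambda>x. det (B x)) has_derivative (\<lambda>u. \<Sum>p\<in>{p. p permutes (UNIV::'n set)}.
          of_int (sign p) * (\<Sum>i\<in>UNIV. B' u $ i $ p i * (\<Prod>j\<in>UNIV-{i}. B x $ j $ p j)))) (at x)"
    unfolding det_def by (intro has_derivative_sum has_derivative_mult_right has_derivative_prod assms)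
  moreover have "(\<Sum>k\<in>UNIV. det (\<chi> i j. if i = k then B' u $ i $ j else B x $ i $ j))
      = (\<Sum>p\<in>{p. p permutes (UNIV::'n set)}.
          of_int (sign p) * (\<Sum>i\<in>UNIV. B' u $ i $ p i * (\<Prod>j\<in>UNIV-{i}. B x $ j $ p j)))" for u
  proof -
    have "(\<Sum>k\<in>UNIV. det (\<chi> i j. if i = k then B' u $ i $ j else B x $ i $ j))
      = (\<Sum>k\<in>UNIV. \<Sum>p\<in>{p. p permutes (UNIV::'n set)}. of_int (sign p) *
           (\<Prod>j\<in>UNIV. if j = k then B' u $ j $ p j else B x $ j $ p j))"
      by (rule sum.cong[OF refl]) (simp add: det_def)
    also have "\<dots> = (\<Sum>p\<in>{p. p permutes (UNIV::'n set)}. \<Sum>k\<in>UNIV. of_int (sign p) *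
           (\<Prod>j\<in>UNIV. if j = k then B' u $ j $ p j else B x $ j $ p j))"
      by (rule sum.swap)
    finally show ?thesis
      by (simp only: prod_if_eq_remove sum_distrib_left)
  qed
  ultimately show ?thesis
    by simp
qed

lemma sum_det_replace_row:
  fixes A H :: "real^'n^'n"
  assumes "det A \<noteq> 0"
  shows "(\<Sum>k\<in>UNIV. det (\<chi> i j. if i = k then H $ i $ j else A $ i $ j))
       = det A * trace (matrix_inv A ** H)"
proof -
  have "det (\<chi> i j. if i = k then H $ i $ j else A $ i $ j) = (H ** matrix_inv A) $ k $ k * det A" for k
  proof -
    let ?x = "row k (H ** matrix_inv A)"
    have "(\<Sum>i\<in>UNIV. ?x $ i *s row i A) = row k ((H ** matrix_inv A) ** A)"
      by (simp add: row_def vec_eq_iff matrix_matrix_mult_def sum_component mult.commute)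
    also have "\<dots> = row k H"
      by (simp add: matrix_mul_assoc[symmetric] matrix_inv_det_nz(2)[OF assms])
    finally have row_k: "(\<Sum>i\<in>UNIV. ?x $ i *s row i A) = row k H" .
    have "(\<chi> i j. if i = k then H $ i $ j else A $ i $ j)
        = (\<chi> i. if i = k then (\<Sum>i\<in>UNIV. ?x $ i *s row i A) else row i A)"
      unfolding row_k by (simp add: vec_eq_iff row_def)
    then show ?thesis
      using cramer_lemma_transpose[of k ?x A] by (simp add: row_def)
  qed
  then have "(\<Sum>k\<in>UNIV. det (\<chi> i j. if i = k then H $ i $ j else A $ i $ j))
      = det A * trace (H ** matrix_inv A)"
    by (simp add: trace_def sum_distrib_left mult.commute)
  then show ?thesis
    by (metis trace_mul_sym)
qed

lemma continuous_on_det: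
  fixes B :: "'a::topological_space \<Rightarrow> real^'n^'n"
  assumes "\<And>i j. continuous_on S (\<lambda>x. B x $ i $ j)"
  shows "continuous_on S (\<lambda>x. det (B x))"
  unfolding det_def by (intro continuous_intros assms)

section \<open>Integral manifolds of the kernel of a gradient\<close>

lemma blinfun_apply_eq_zero_iff: "blinfun_apply L = (\<lambda>u. 0) \<longleftrightarrow> L = 0"
  by (auto intro: blinfun_eqI)

lemma blinfun_nonzero_obtains_one:
  fixes L :: "'a::real_normed_vector \<Rightarrow>\<^sub>L real"
  assumes "L \<noteq> 0"
  obtains w where "L w = 1"
proof -
  obtain u where u: "L u \<noteq> 0"
    using assms blinfun_eqI[of L 0] by auto
  show ?thesis
    by (rule that[of "(1 / L u) *\<^sub>R u"]) (use u in \<open>simp add: blinfun.scaleR_right\<close>)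
qed

text \<open>The map straightening the level sets of \<open>f\<close> near \<open>q\<close> into those of the linear form \<open>L\<close>,
  for \<open>L\<close> the derivative of \<open>f\<close> at \<open>q\<close> and \<open>L w = 1\<close>.\<close>

definition straightening :: "('a::real_normed_vector \<Rightarrow> real) \<Rightarrow> ('a \<Rightarrow>\<^sub>L real) \<Rightarrow> 'a \<Rightarrow> 'a \<Rightarrow> 'a \<Rightarrow> 'a"
  where "straightening f L q w z = (z - q) - L (z - q) *\<^sub>R w + f z *\<^sub>R w"

lemma linear_form_straightening:
  fixes L :: "'a::real_normed_vector \<Rightarrow>\<^sub>L real"
  shows "L w = 1 \<Longrightarrow> L (straightening f L q w z) = f z"
  by (simp add: straightening_def blinfun.add_right blinfun.diff_right blinfun.scaleR_right)

lemma straightening_local_inverse: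
  fixes f :: "'a::euclidean_space \<Rightarrow> real" and f' :: "'a \<Rightarrow> 'a \<Rightarrow>\<^sub>L real"
  assumes U: "open U" "q \<in> U"
    and der: "\<And>x. x \<in> U \<Longrightarrow> (f has_derivative f' x) (at x)"
    and cont: "continuous_on U f'"
    and w: "f' q w = 1"
  obtains U' V g g' where "open U'" "U' \<subseteq> U" "q \<in> U'" "open V"
    "homeomorphism U' V (straightening f (f' q) q w) g"
    "\<And>v. v \<in> V \<Longrightarrow> (g has_derivative g' v) (at v)"
    "\<And>v k. v \<in> V \<Longrightarrow> f' (g v) (g' v k) = f' q k"
    "\<And>k. g' (straightening f (f' q) q w q) k = k"
proof -
  define \<Phi>' where
    "\<Phi>' z = id_blinfun - (blinfun_scaleR_left w o\<^sub>L f' q) + (blinfun_scaleR_left w o\<^sub>L f' z)" for z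
  have \<Phi>'_apply: "\<Phi>' z u = u - f' q u *\<^sub>R w + f' z u *\<^sub>R w" for z u
    by (simp add: \<Phi>'_def blinfun.add_left blinfun.diff_left)
  have d\<Phi>: "(straightening f (f' q) q w has_derivative \<Phi>' z) (at z)" if "z \<in> U" for z
  proof -
    have "((\<lambda>z. f' q (z - q)) has_derivative f' q) (at z)"
      using bounded_linear.has_derivative[OF blinfun.bounded_linear_right
          has_derivative_diff[OF has_derivative_ident has_derivative_const]] by simp
    then show ?thesis
      unfolding straightening_def[abs_def] \<Phi>'_apply[abs_def]
      using has_derivative_add[OF has_derivative_diff[OF has_derivative_diff[OF has_derivative_ident
          has_derivative_const] has_derivative_scaleR_left] has_derivative_scaleR_left[OF der[OF that]]]
      by simp
  qed
  have c\<Phi>': "continuous_on U \<Phi>'"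
    unfolding \<Phi>'_def
    by (intro continuous_intros bounded_bilinear.continuous_on[OF bounded_bilinear_blinfun_compose] cont)
  have \<Phi>'q: "\<Phi>' q = id_blinfun"
    by (rule blinfun_eqI) (simp add: \<Phi>'_apply)
  then have "id_blinfun o\<^sub>L \<Phi>' q = id_blinfun"
    by (simp add: blinfun_eqI)
  then obtain U' V g g' where U': "open U'" "U' \<subseteq> U" "q \<in> U'" and V: "open V"
    "straightening f (f' q) q w q \<in> V"
    and hom: "homeomorphism U' V (straightening f (f' q) q w) g"
    and dg: "\<And>v. v \<in> V \<Longrightarrow> (g has_derivative g' v) (at v)"
    and g': "\<And>v. v \<in> V \<Longrightarrow> g' v = inv (\<Phi>' (g v))"
    and bij: "\<And>v. v \<in> V \<Longrightarrow> bij (\<Phi>' (g v))"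
    using inverse_function_theorem[OF U(1) d\<Phi> c\<Phi>' U(2)] by blast
  have "f' (g v) (g' v k) = f' q k" if "v \<in> V" for v k
  proof -
    have "\<Phi>' (g v) (g' v k) = k"
      using g'[OF that] bij[OF that] by (simp add: bij_is_surj surj_f_inv_f)
    moreover have "f' q (\<Phi>' z u) = f' z u" for z u
      by (simp add: \<Phi>'_apply blinfun.add_right blinfun.diff_right blinfun.scaleR_right w)
    ultimately show ?thesis
      by metis
  qed
  moreover have "g' (straightening f (f' q) q w q) k = k" for k
    using g'[OF V(2)] homeomorphism_apply1[OF hom U'(3)] by (simp add: \<Phi>'q)
  ultimately show ?thesis
    using that U' V(1) hom dg by blast
qed

lemma level_set_flattening:
  fixes f :: "'a::euclidean_space \<Rightarrow> real" and f' :: "'a \<Rightarrow> 'a \<Rightarrow>\<^sub>L real"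
  assumes U: "open U" "q \<in> U"
    and der: "\<And>x. x \<in> U \<Longrightarrow> (f has_derivative f' x) (at x)"
    and cont: "continuous_on U f'"
    and fq: "f q = 0" and w: "f' q w = 1"
  obtains r and g :: "'a \<Rightarrow> 'a" and g' where "r > 0" "g 0 = q" "g ` ball 0 r \<subseteq> U" "open (g ` ball 0 r)"
    "continuous_on (ball 0 r) g"
    "\<And>v. v \<in> ball 0 r \<Longrightarrow> f (g v) = f' q v"
    "\<And>v. v \<in> ball 0 r \<Longrightarrow> (g has_derivative g' v) (at v)"
    "\<And>v k. v \<in> ball 0 r \<Longrightarrow> f' (g v) (g' v k) = f' q k"
    "\<And>k. g' 0 k = k"
proof (rule straightening_local_inverse[OF U der cont w])
  fix U' V g g'
  assume U': "open U'" "U' \<subseteq> U" "q \<in> U'" and V: "open V"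
    and hom: "homeomorphism U' V (straightening f (f' q) q w) g"
    and dg: "\<And>v. v \<in> V \<Longrightarrow> (g has_derivative g' v) (at v)"
    and f'g': "\<And>v k. v \<in> V \<Longrightarrow> f' (g v) (g' v k) = f' q k"
    and g'q: "\<And>k. g' (straightening f (f' q) q w q) k = k"
  let ?\<Phi> = "straightening f (f' q) q w"
  have \<Phi>q: "?\<Phi> q = 0"
    by (simp add: straightening_def fq)
  have hom': "\<And>z. z \<in> U' \<Longrightarrow> g (?\<Phi> z) = z" "?\<Phi> ` U' = V" "continuous_on U' ?\<Phi>"
    "\<And>v. v \<in> V \<Longrightarrow> ?\<Phi> (g v) = v" "g ` V = U'" "continuous_on V g"
    using hom unfolding homeomorphism_def by auto
  obtain r where r: "r > 0" "ball 0 r \<subseteq> V"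
    using V U'(3) hom'(2) \<Phi>q openE by (metis image_eqI)
  have "g ` ball 0 r = U' \<inter> ?\<Phi> -` ball 0 r"
  proof
    show "g ` ball 0 r \<subseteq> U' \<inter> ?\<Phi> -` ball 0 r"
      using r(2) hom'(4,5) by auto
    show "U' \<inter> ?\<Phi> -` ball 0 r \<subseteq> g ` ball 0 r"
    proof
      fix z
      assume "z \<in> U' \<inter> ?\<Phi> -` ball 0 r"
      then show "z \<in> g ` ball 0 r"
        by (intro image_eqI[of _ _ "?\<Phi> z"]) (auto simp: hom'(1))
    qed
  qed
  then have open_image: "open (g ` ball 0 r)"
    using continuous_open_preimage[OF hom'(3) U'(1)] by simp
  have fg: "f (g v) = f' q v" if "v \<in> V" for v
    using linear_form_straightening[of "f' q" w f q "g v", OF w] hom'(4)[OF that] by simp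
  show thesis
  proof (rule that[of r g g'])
    show "g 0 = q"
      using hom'(1)[OF U'(3)] \<Phi>q by simp
    show "g ` ball 0 r \<subseteq> U"
      using r(2) hom'(5) U'(2) by blast
    show "continuous_on (ball 0 r) g"
      using continuous_on_subset[OF hom'(6) r(2)] .
  qed (use r open_image fg dg f'g' g'q \<Phi>q in auto)
qed

lemma has_real_derivative_along_ray:
  assumes "(g has_derivative g') (at (s *\<^sub>R v))" and "(h has_derivative h') (at (g (s *\<^sub>R v)))"
  shows "((\<lambda>t. h (g (t *\<^sub>R v))) has_real_derivative h' (g' v)) (at s)"
proof -
  have "((\<lambda>t::real. t *\<^sub>R v) has_derivative (\<lambda>t. t *\<^sub>R v)) (at s)"
    by (rule derivative_eq_intros | simp)+
  moreover have "(g has_derivative g') (at ((\<lambda>t. t *\<^sub>R v) s))"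
    using assms(1) by simp
  ultimately have "((\<lambda>t. g (t *\<^sub>R v)) has_derivative (\<lambda>t. g' (t *\<^sub>R v))) (at s)"
    by (rule has_derivative_compose)
  then have "((\<lambda>t. h (g (t *\<^sub>R v))) has_derivative (\<lambda>t. h' (g' (t *\<^sub>R v)))) (at s)"
    using has_derivative_compose assms(2) by blast
  moreover have "h' (g' (t *\<^sub>R v)) = h' (g' v) * t" for t
    using has_derivative_linear[OF assms(1)] has_derivative_linear[OF assms(2)]
    by (simp add: linear_scale)
  ultimately show ?thesis
    unfolding has_field_derivative_def by simp
qed


lemma level_set_tangent_vanishing:
  fixes f h :: "'a::euclidean_space \<Rightarrow> real" and f' :: "'a \<Rightarrow> 'a \<Rightarrow>\<^sub>L real"
  assumes U: "open U" "q \<in> U"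
    and der: "\<And>x. x \<in> U \<Longrightarrow> (f has_derivative f' x) (at x)"
    and cont: "continuous_on U f'"
    and fq: "f q = 0" and nz: "f' q \<noteq> 0"
    and dh: "(h has_derivative h') (at q)"
    and W: "open W" "q \<in> W" and hz: "\<And>x. x \<in> W \<Longrightarrow> x \<in> U \<Longrightarrow> f x = 0 \<Longrightarrow> h x = 0"
    and u: "f' q u = 0"
  shows "h' u = 0"
proof -
  obtain w where w: "f' q w = 1"
    using blinfun_nonzero_obtains_one[OF nz] .
  obtain r and g :: "'a \<Rightarrow> 'a" and g' where r: "r > 0" and g0: "g 0 = q" and gU: "g ` ball 0 r \<subseteq> U"
    and "open (g ` ball 0 r)" and cg: "continuous_on (ball 0 r) g"
    and fg: "\<And>v. v \<in> ball 0 r \<Longrightarrow> f (g v) = f' q v"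
    and dg: "\<And>v. v \<in> ball 0 r \<Longrightarrow> (g has_derivative g' v) (at v)"
    and "\<And>v k. v \<in> ball 0 r \<Longrightarrow> f' (g v) (g' v k) = f' q k" and g'0: "\<And>k. g' 0 k = k"
    by (rule level_set_flattening[OF U der cont fq w]) auto
  define T where "T = {t::real. t *\<^sub>R u \<in> ball 0 r} \<inter> (\<lambda>t. g (t *\<^sub>R u)) -` W"
  have open_ray: "open {t::real. t *\<^sub>R u \<in> ball 0 r}"
    unfolding mem_ball by (intro open_Collect_less continuous_intros)
  have "continuous_on {t::real. t *\<^sub>R u \<in> ball 0 r} (\<lambda>t. g (t *\<^sub>R u))"
    by (intro continuous_on_compose2[OF cg] continuous_intros) auto
  then have open_T: "open T"
    unfolding T_def using continuous_open_preimage open_ray W(1) by blast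
  have "0 \<in> T"
    unfolding T_def using r g0 W(2) by simp
  have vanish: "h (g (t *\<^sub>R u)) = 0" if "t \<in> T" for t
  proof -
    have tu: "t *\<^sub>R u \<in> ball 0 r" "g (t *\<^sub>R u) \<in> W"
      using that unfolding T_def by auto
    show ?thesis
      using gU tu(1) fg[OF tu(1)] u by (intro hz[OF tu(2)]) (auto simp: blinfun.scaleR_right)
  qed
  have "((\<lambda>t. h (g (t *\<^sub>R u))) has_real_derivative h' u) (at 0)"
    using has_real_derivative_along_ray[of g "g' 0" 0 u h h'] dg[of 0] r dh g0 g'0 by simp
  then have "((\<lambda>t. 0) has_real_derivative h' u) (at 0)"
    by (rule has_field_derivative_transform_within_open[OF _ open_T \<open>0 \<in> T\<close>]) (rule vanish)
  then show ?thesis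
    by (rule DERIV_unique) (rule DERIV_const)
qed

lemma level_set_locally_constant:
  fixes f \<phi> :: "'a::euclidean_space \<Rightarrow> real" and f' :: "'a \<Rightarrow> 'a \<Rightarrow>\<^sub>L real"
  assumes U: "open U" "p \<in> U"
    and der: "\<And>x. x \<in> U \<Longrightarrow> (f has_derivative f' x) (at x)"
    and cont: "continuous_on U f'"
    and fp: "f p = 0" and nz: "f' p \<noteq> 0"
    and d\<phi>: "\<And>y. y \<in> U \<Longrightarrow> (\<phi> has_derivative \<phi>' y) (at y)"
    and ker: "\<And>y u. y \<in> U \<Longrightarrow> f y = 0 \<Longrightarrow> f' y \<noteq> 0 \<Longrightarrow> f' y u = 0 \<Longrightarrow> \<phi>' y u = 0"
  obtains W where "open W" "p \<in> W" "W \<subseteq> U" "\<And>z. z \<in> W \<Longrightarrow> f z = 0 \<Longrightarrow> \<phi> z = \<phi> p"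
proof -
  obtain w where w: "f' p w = 1"
    using blinfun_nonzero_obtains_one[OF nz] .
  obtain r and g :: "'a \<Rightarrow> 'a" and g' where r: "r > 0" and g0: "g 0 = p" and gU: "g ` ball 0 r \<subseteq> U"
    and open_image: "open (g ` ball 0 r)" and "continuous_on (ball 0 r) g"
    and fg: "\<And>v. v \<in> ball 0 r \<Longrightarrow> f (g v) = f' p v"
    and dg: "\<And>v. v \<in> ball 0 r \<Longrightarrow> (g has_derivative g' v) (at v)"
    and f'g': "\<And>v k. v \<in> ball 0 r \<Longrightarrow> f' (g v) (g' v k) = f' p k" and "\<And>k. g' 0 k = k"
    by (rule level_set_flattening[OF U der cont fp w]) auto
  have const: "\<phi> (g v) = \<phi> p" if v: "v \<in> ball 0 r" "f (g v) = 0" for v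
  proof -
    have ray: "s *\<^sub>R v \<in> ball 0 r" if "s \<in> {0..1}" for s
      using v(1) that mult_left_le_one_le[of "norm v" s] by auto
    have "f' p v = 0"
      using fg v by simp
    have ray_deriv: "((\<lambda>t. \<phi> (g (t *\<^sub>R v))) has_real_derivative 0) (at s)" if "s *\<^sub>R v \<in> ball 0 r" for s
    proof -
      have "\<phi>' (g (s *\<^sub>R v)) (g' (s *\<^sub>R v) v) = 0"
      proof (rule ker)
        show "g (s *\<^sub>R v) \<in> U" "f (g (s *\<^sub>R v)) = 0" "f' (g (s *\<^sub>R v)) (g' (s *\<^sub>R v) v) = 0"
          using that gU fg f'g' \<open>f' p v = 0\<close> by (auto simp: blinfun.scaleR_right)
        show "f' (g (s *\<^sub>R v)) \<noteq> 0"
          using f'g'[OF that, of w] w by auto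
      qed
      moreover have "g (s *\<^sub>R v) \<in> U"
        using that gU by blast
      ultimately show ?thesis
        using has_real_derivative_along_ray[OF dg[OF that] d\<phi>] by simp
    qed
    have "(\<lambda>t. \<phi> (g (t *\<^sub>R v))) 1 = (\<lambda>t. \<phi> (g (t *\<^sub>R v))) 0"
    proof (rule DERIV_isconst_end[of 0 1])
      show "continuous_on {0..1} (\<lambda>t. \<phi> (g (t *\<^sub>R v)))"
        using DERIV_isCont[OF ray_deriv[OF ray]] by (simp add: continuous_at_imp_continuous_on)
      show "((\<lambda>t. \<phi> (g (t *\<^sub>R v))) has_real_derivative 0) (at t)" if "0 < t" "t < 1" for t
        using ray_deriv[OF ray] that by simp
    qed simp
    then show ?thesis
      by (simp add: g0)
  qed
  show ?thesis
  proof (rule that[OF open_image _ gU])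
    show "p \<in> g ` ball 0 r"
      using r g0 by (intro image_eqI[of _ _ 0]) auto
    show "\<phi> z = \<phi> p" if "z \<in> g ` ball 0 r" "f z = 0" for z
      using that const by auto
  qed
qed

lemma integral_manifold_chart:
  fixes D :: "'a::euclidean_space \<Rightarrow> 'a set"
  assumes "integral_manifold D M S" "p \<in> S"
  obtains U f f' where "open U" "p \<in> U" "U \<subseteq> M"
    "\<And>x. x \<in> U \<Longrightarrow> (f has_derivative blinfun_apply ((f' :: 'a \<Rightarrow> 'a \<Rightarrow>\<^sub>L real) x)) (at x)"
    "continuous_on U f'" "f' p \<noteq> 0" "S \<inter> U = {x \<in> U. f x = 0}" "D p = {u. f' p u = 0}"
proof -
  have "\<forall>p\<in>S. \<exists>U f f'. open U \<and> p \<in> U \<and> U \<subseteq> M \<and>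
      (\<forall>x\<in>U. (f has_derivative blinfun_apply (f' x)) (at x)) \<and>
      continuous_on U (f' :: 'a \<Rightarrow> 'a \<Rightarrow>\<^sub>L real) \<and> blinfun_apply (f' p) \<noteq> (\<lambda>u. 0) \<and>
      S \<inter> U = {x \<in> U. f x = 0} \<and> {u. blinfun_apply (f' p) u = 0} = D p"
    using assms(1) unfolding integral_manifold_def by (elim conjE)
  then have "\<exists>U f f'. open U \<and> p \<in> U \<and> U \<subseteq> M \<and>
      (\<forall>x\<in>U. (f has_derivative blinfun_apply (f' x)) (at x)) \<and>
      continuous_on U (f' :: 'a \<Rightarrow> 'a \<Rightarrow>\<^sub>L real) \<and> blinfun_apply (f' p) \<noteq> (\<lambda>u. 0) \<and>
      S \<inter> U = {x \<in> U. f x = 0} \<and> {u. blinfun_apply (f' p) u = 0} = D p"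
    using assms(2) by (rule bspec)
  then show ?thesis
    using that unfolding blinfun_apply_eq_zero_iff Ball_def by (metis (lifting))
qed

lemma integral_manifold_locally_constant:
  fixes \<phi> :: "'a::euclidean_space \<Rightarrow> real"
  assumes S: "integral_manifold D M S"
    and d\<phi>: "\<And>x. x \<in> M \<Longrightarrow> (\<phi> has_derivative \<phi>' x) (at x)"
    and ker: "\<And>x u. x \<in> M \<Longrightarrow> u \<in> D x \<Longrightarrow> \<phi>' x u = 0"
    and "p \<in> S"
  shows "\<forall>\<^sub>F x in at p within S. \<phi> p = \<phi> x"
proof -
  obtain U f and f' :: "'a \<Rightarrow> 'a \<Rightarrow>\<^sub>L real" where U: "open U" "p \<in> U" "U \<subseteq> M"
    and der: "\<And>x. x \<in> U \<Longrightarrow> (f has_derivative f' x) (at x)" and cont: "continuous_on U f'"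
    and nz: "f' p \<noteq> 0" and SU: "S \<inter> U = {x \<in> U. f x = 0}"
    by (rule integral_manifold_chart[OF S \<open>p \<in> S\<close>]) auto
  have fp: "f p = 0"
    using SU \<open>p \<in> S\<close> U(2) by (auto simp: set_eq_iff)
  have d\<phi>U: "(\<phi> has_derivative \<phi>' y) (at y)" if "y \<in> U" for y
    using d\<phi> U(3) that by blast
  have tangent: "\<phi>' y u = 0" if y: "y \<in> U" "f y = 0" "f' y \<noteq> 0" "f' y u = 0" for y u
  proof -
    have "y \<in> S"
      using SU y by blast
    then obtain U2 f2 and f2' :: "'a \<Rightarrow> 'a \<Rightarrow>\<^sub>L real" where U2: "open U2" "y \<in> U2"
      and der2: "\<And>x. x \<in> U2 \<Longrightarrow> (f2 has_derivative f2' x) (at x)"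
      and SU2: "S \<inter> U2 = {x \<in> U2. f2 x = 0}" and D2: "D y = {u. f2' y u = 0}"
      by (rule integral_manifold_chart[OF S]) auto
    have "f2 x = 0" if "x \<in> U2" "x \<in> U" "f x = 0" for x
      using that SU SU2 by (auto simp: set_eq_iff)
    then have "f2' y u = 0"
      by (intro level_set_tangent_vanishing[OF U(1) y(1) der cont y(2,3) der2[OF U2(2)] U2 _ y(4)])
    then show ?thesis
      using D2 ker y(1) U(3) by blast
  qed
  obtain W where W: "open W" "p \<in> W" "W \<subseteq> U"
    and const: "\<And>z. z \<in> W \<Longrightarrow> f z = 0 \<Longrightarrow> \<phi> z = \<phi> p"
    by (rule level_set_locally_constant[OF U(1,2) der cont fp nz d\<phi>U tangent]) auto
  show ?thesis
    unfolding eventually_at_topological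
  proof (intro exI[of _ W] conjI ballI impI)
    fix z
    assume "z \<in> W" "z \<noteq> p" "z \<in> S"
    then have "f z = 0"
      using W(3) SU by (auto simp: set_eq_iff)
    then show "\<phi> p = \<phi> z"
      using const[OF \<open>z \<in> W\<close>] by simp
  qed (use W in auto)
qed

lemma integral_manifold_subset_level_set:
  fixes \<phi> :: "'a::euclidean_space \<Rightarrow> real"
  assumes S: "integral_manifold D M S"
    and d\<phi>: "\<And>x. x \<in> M \<Longrightarrow> (\<phi> has_derivative \<phi>' x) (at x)"
    and ker: "\<And>x u. x \<in> M \<Longrightarrow> u \<in> D x \<Longrightarrow> \<phi>' x u = 0"
    and a: "a \<in> S"
  shows "S \<subseteq> {x \<in> M. \<phi> x = \<phi> a}"
proof -
  have "connected S" "S \<subseteq> M"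
    using S by (auto simp: integral_manifold_def)
  have "\<phi> a = \<phi> x" if "x \<in> S" for x
    by (rule connected_local_const[OF \<open>connected S\<close> a that])
      (use integral_manifold_locally_constant[OF S d\<phi> ker] in blast)
  then show ?thesis
    using \<open>S \<subseteq> M\<close> by auto
qed

lemma level_set_integral_manifold:
  fixes \<phi> :: "'a::euclidean_space \<Rightarrow> real" and \<phi>' :: "'a \<Rightarrow> 'a \<Rightarrow>\<^sub>L real"
  assumes "open M"
    and "\<And>x. x \<in> M \<Longrightarrow> (\<phi> has_derivative \<phi>' x) (at x)" and "continuous_on M \<phi>'"
    and "\<And>x. x \<in> M \<Longrightarrow> \<phi>' x \<noteq> 0" and "\<And>x. x \<in> M \<Longrightarrow> D x = {u. \<phi>' x u = 0}"
    and "{x \<in> M. \<phi> x = c} \<noteq> {}" and "connected {x \<in> M. \<phi> x = c}"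
  shows "integral_manifold D M {x \<in> M. \<phi> x = c}"
  unfolding integral_manifold_def blinfun_apply_eq_zero_iff
  by (intro conjI ballI exI[of _ M] exI[of _ "\<lambda>x. \<phi> x - c"] exI[of _ \<phi>'])
    (use assms in \<open>auto intro!: derivative_eq_intros\<close>)

theorem maximal_integral_manifolds_eq_level_sets:
  fixes \<phi> :: "'a::euclidean_space \<Rightarrow> real" and \<phi>' :: "'a \<Rightarrow> 'a \<Rightarrow>\<^sub>L real"
  assumes M: "open M"
    and d\<phi>: "\<And>x. x \<in> M \<Longrightarrow> (\<phi> has_derivative \<phi>' x) (at x)" and cont: "continuous_on M \<phi>'"
    and nz: "\<And>x. x \<in> M \<Longrightarrow> \<phi>' x \<noteq> 0" and D: "\<And>x. x \<in> M \<Longrightarrow> D x = {u. \<phi>' x u = 0}"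
    and connected: "\<And>c. connected {x \<in> M. \<phi> x = c}"
  shows "{S. maximal_integral_manifold D M S} = {{x \<in> M. \<phi> x = c} | c. c \<in> \<phi> ` M}"
proof -
  have level: "integral_manifold D M {x \<in> M. \<phi> x = \<phi> a}" if "a \<in> M" for a
    using that by (intro level_set_integral_manifold[OF M d\<phi> cont nz D _ connected]) auto
  have sub: "S \<subseteq> {x \<in> M. \<phi> x = \<phi> a}" if "integral_manifold D M S" "a \<in> S" for S a
    using D that by (intro integral_manifold_subset_level_set[OF _ d\<phi>]) auto
  have "maximal_integral_manifold D M S \<longleftrightarrow> (\<exists>a\<in>M. S = {x \<in> M. \<phi> x = \<phi> a})" for S
  proof
    assume max: "maximal_integral_manifold D M S"
    then have S: "integral_manifold D M S"
      by (simp add: maximal_integral_manifold_def)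
    then obtain a where a: "a \<in> S" "a \<in> M"
      by (auto simp: integral_manifold_def)
    have "{x \<in> M. \<phi> x = \<phi> a} = S"
      using max level[OF a(2)] sub[OF S a(1)] by (simp add: maximal_integral_manifold_def)
    then show "\<exists>a\<in>M. S = {x \<in> M. \<phi> x = \<phi> a}"
      using a(2) by blast
  next
    assume "\<exists>a\<in>M. S = {x \<in> M. \<phi> x = \<phi> a}"
    then obtain a where a: "a \<in> M" and S: "S = {x \<in> M. \<phi> x = \<phi> a}"
      by blast
    have "S' = S" if "integral_manifold D M S'" "S \<subseteq> S'" for S'
    proof
      show "S' \<subseteq> S"
        using sub[OF that(1), of a] that(2) a unfolding S by auto
    qed (rule that(2))
    then show "maximal_integral_manifold D M S"
      using level[OF a] unfolding maximal_integral_manifold_def S by blast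
  qed
  then show ?thesis
    by blast
qed

section \<open>Real Jordan algebras\<close>

locale jordan =
  fixes mul :: "real^'n \<Rightarrow> real^'n \<Rightarrow> real^'n"
  assumes jordan_algebra: "jordan_algebra mul"
begin

lemma bilinear_mul: "bilinear mul"
  and mul_commute: "mul a b = mul b a"
  and jordan_identity: "mul x (mul (mul x x) y) = mul (mul x x) (mul x y)"
  using jordan_algebra unfolding jordan_algebra_def by auto

lemmas mul_simps =
  bilinear_ladd[OF bilinear_mul] bilinear_radd[OF bilinear_mul]
  bilinear_lsub[OF bilinear_mul] bilinear_rsub[OF bilinear_mul]
  bilinear_lneg[OF bilinear_mul] bilinear_rneg[OF bilinear_mul]
  bilinear_lmul[OF bilinear_mul] bilinear_rmul[OF bilinear_mul]
  bilinear_lzero[OF bilinear_mul] bilinear_rzero[OF bilinear_mul]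

definition jordan_defect :: "real^'n \<Rightarrow> real^'n \<Rightarrow> real^'n \<Rightarrow> real^'n \<Rightarrow> real^'n" where
  "jordan_defect a b c d =
     mul a (mul (mul b c) d) + mul b (mul (mul a c) d) + mul c (mul (mul a b) d)
     - (mul (mul b c) (mul a d) + mul (mul a c) (mul b d) + mul (mul a b) (mul c d))"

lemma jordan_defect_eq_0: "jordan_defect a b c d = 0"
proof -
  define J where "J x = mul x (mul (mul x x) d) - mul (mul x x) (mul x d)" for x
  \<comment> \<open>\<open>J\<close> is cubic in \<open>x\<close>; inclusion-exclusion isolates its trilinear part\<close>
  have "J (a + b + c) - J (a + b) - J (a + c) - J (b + c) + J a + J b + J c
      = 2 *\<^sub>R jordan_defect a b c d"
    unfolding J_def jordan_defect_def
    by (simp only: mul_simps) (simp add: mul_commute vec_eq_iff)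
  moreover have "J x = 0" for x
    by (simp add: J_def jordan_identity)
  ultimately show ?thesis
    by simp
qed

lemma mul_commutator_derivation:
  "mul (mul a (mul c b) - mul c (mul a b)) z
     = mul a (mul c (mul b z)) - mul c (mul a (mul b z))
       - mul b (mul a (mul c z)) + mul b (mul c (mul a z))"
proof -
  have "mul (mul a (mul c b) - mul c (mul a b)) z
     - (mul a (mul c (mul b z)) - mul c (mul a (mul b z))
       - mul b (mul a (mul c z)) + mul b (mul c (mul a z)))
     = jordan_defect z c b a - jordan_defect z b a c"
    unfolding jordan_defect_def
    by (simp only: mul_simps) (simp add: mul_commute vec_eq_iff)
  then show ?thesis
    by (simp add: jordan_defect_eq_0)
qed

lemma Pop_apply: "Pop mul x v = 2 *\<^sub>R mul x (mul x v) - mul (mul x x) v"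
  by (simp add: Pop_def Lop_def)

text \<open>\<open>Ppolar x u\<close> is the derivative of \<open>P\<close> at \<open>x\<close> in direction \<open>u\<close>; in triple product
  notation \<open>Ppolar a b v = 2 {a v b}\<close>, and \<open>Ppolar_Pop\<close> is the identity
  \<open>{x z (P x y)} = P x {y x z}\<close>.\<close>

definition Ppolar :: "real^'n \<Rightarrow> real^'n \<Rightarrow> real^'n \<Rightarrow> real^'n" where
  "Ppolar a b v = 2 *\<^sub>R (mul a (mul b v) + mul b (mul a v) - mul (mul a b) v)"

lemma Ppolar_Pop: "Ppolar x (Pop mul x y) z = Pop mul x (Ppolar y z x)"
proof -
  let ?xx = "mul x x" and ?xy = "mul x y" and ?xz = "mul x z"
  have "3 *\<^sub>R (Ppolar x (Pop mul x y) z - Pop mul x (Ppolar y z x))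
      = 12 *\<^sub>R jordan_defect z y x ?xx - 6 *\<^sub>R jordan_defect z x x ?xy
        - 12 *\<^sub>R jordan_defect z x ?xy x + 6 *\<^sub>R jordan_defect y x x ?xz
        - 12 *\<^sub>R jordan_defect y x ?xz x - 6 *\<^sub>R jordan_defect y x ?xx z
        + 6 *\<^sub>R jordan_defect (mul y z) x x x - 4 *\<^sub>R jordan_defect x x x (mul y z)
        + 6 *\<^sub>R jordan_defect x x ?xy z + 2 *\<^sub>R mul z (jordan_defect x x x y)
        + 6 *\<^sub>R mul y (jordan_defect z x x x)"
    unfolding Ppolar_def Pop_apply jordan_defect_def
    by (simp only: mul_simps) (simp add: mul_commute vec_eq_iff)
  then show ?thesis
    by (simp add: jordan_defect_eq_0 mul_simps)
qed

definition trL :: "real^'n \<Rightarrow> real" where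
  "trL w = trace (matrix (mul w))"

lemma gform_eq_trL: "gform mul a b = trL (mul a b)"
  by (simp add: gform_def trL_def Lop_def)

lemma linear_mul: "linear (mul a)"
  using bilinear_mul unfolding bilinear_def by blast

lemma linear_trL: "linear trL"
  by (rule linearI) (simp_all add: trL_def trace_matrix_eq_sum mul_simps sum.distrib sum_distrib_left)

lemma trL_mul_left_commute: "trL (mul p (mul q r)) = trL (mul q (mul p r))"
proof -
  have "trace (matrix ((mul p \<circ> mul q) \<circ> mul r)) = trace (matrix (mul r \<circ> (mul p \<circ> mul q)))"
       "trace (matrix ((mul q \<circ> mul p) \<circ> mul r)) = trace (matrix (mul r \<circ> (mul q \<circ> mul p)))"
    by (intro trace_matrix_comp_commute linear_mul linear_compose)+
  then have "trL (mul p (mul q r) - mul q (mul p r)) = 0"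
    unfolding trL_def trace_matrix_eq_sum mul_commutator_derivation
    by (simp add: sum_subtractf sum.distrib)
  then show ?thesis
    by (simp add: linear_diff[OF linear_trL])
qed

lemma gform_sym: "gform mul a b = gform mul b a"
  by (simp add: gform_eq_trL mul_commute)

lemma gform_mul_sym: "gform mul (mul c a) b = gform mul a (mul c b)"
  using trL_mul_left_commute[of a b c] by (simp add: gform_eq_trL mul_commute)

lemma gform_Pop_sym: "gform mul (Pop mul x a) b = gform mul a (Pop mul x b)"
  using gform_mul_sym[of x "mul x a" b] gform_mul_sym[of x a "mul x b"] gform_mul_sym[of "mul x x" a b]
  by (simp add: Pop_apply gform_eq_trL mul_simps linear_diff[OF linear_trL] linear_scale[OF linear_trL])

lemma linear_Pop: "linear (Pop mul x)"
  by (rule linearI) (simp_all add: Pop_apply mul_simps algebra_simps)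

lemma linear_Ppolar_middle: "linear (\<lambda>z. Ppolar a z b)"
  by (rule linearI) (simp_all add: Ppolar_def mul_simps algebra_simps)

lemma mul_has_derivative:
  assumes "(f has_derivative f') (at x)" and "(g has_derivative g') (at x)"
  shows "((\<lambda>x. mul (f x) (g x)) has_derivative (\<lambda>h. mul (f x) (g' h) + mul (f' h) (g x))) (at x)"
  using bilinear_mul bilinear_conv_bounded_bilinear bounded_bilinear.FDERIV assms by blast

lemma Pop_has_derivative: "((\<lambda>x. Pop mul x v) has_derivative (\<lambda>u. Ppolar x u v)) (at x)"
proof -
  have "((\<lambda>x. mul x (mul x v)) has_derivative (\<lambda>h. mul x (mul h v) + mul h (mul x v))) (at x)"
    using mul_has_derivative[OF has_derivative_ident mul_has_derivative[OF has_derivative_ident has_derivative_const]]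
    by (simp add: mul_simps)
  moreover have "((\<lambda>x. mul (mul x x) v) has_derivative (\<lambda>h. mul (mul x h + mul h x) v)) (at x)"
    using mul_has_derivative[OF mul_has_derivative[OF has_derivative_ident has_derivative_ident] has_derivative_const]
    by (simp add: mul_simps)
  ultimately have "((\<lambda>x. 2 *\<^sub>R mul x (mul x v) - mul (mul x x) v) has_derivative
      (\<lambda>h. 2 *\<^sub>R (mul x (mul h v) + mul h (mul x v)) - mul (mul x h + mul h x) v)) (at x)"
    by (intro has_derivative_diff has_derivative_scaleR_right)
  then show ?thesis
    unfolding Pop_apply
    by (rule has_derivative_eq_rhs)
      (simp add: Ppolar_def fun_eq_iff mul_simps, simp add: mul_commute vec_eq_iff algebra_simps)
qed

lemma matrix_Pop_entry_has_derivative: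
  "((\<lambda>x. matrix (Pop mul x) $ i $ j) has_derivative (\<lambda>u. matrix (Ppolar x u) $ i $ j)) (at x)"
  unfolding matrix_def
  using bounded_linear.has_derivative[OF bounded_linear_vec_nth Pop_has_derivative[of "axis j 1" x], of i]
  by simp

abbreviation detP :: "real^'n \<Rightarrow> real" where
  "detP x \<equiv> det (matrix (Pop mul x))"

lemma continuous_on_matrix_Pop_entry: "continuous_on S (\<lambda>x. matrix (Pop mul x) $ i $ j)"
  using matrix_Pop_entry_has_derivative has_derivative_continuous
  by (blast intro: continuous_at_imp_continuous_on)

lemma continuous_on_detP: "continuous_on S detP"
  by (rule continuous_on_det) (rule continuous_on_matrix_Pop_entry)

lemma matrix_Pop_mult: "matrix (Pop mul x) *v v = Pop mul x v"
  using matrix_vector_mul(2)[OF linear_Pop] by metis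

lemma Pop_matrix_inv:
  assumes "detP x \<noteq> 0"
  shows "Pop mul x (matrix_inv (matrix (Pop mul x)) *v v) = v"
  by (simp flip: matrix_Pop_mult add: matrix_vector_mul_assoc matrix_inv_det_nz(1)[OF assms])

lemma Pop_jinv: "detP x \<noteq> 0 \<Longrightarrow> Pop mul x (jinv mul x) = x"
  unfolding jinv_def by (rule Pop_matrix_inv)

text \<open>The key identity: with \<open>P x y = u\<close>, \<open>Ppolar_Pop\<close> factors \<open>Ppolar x u\<close> as
  \<open>P x\<close> composed with \<open>Ppolar y \<cdot> x\<close>, whose trace is \<open>2 g(y, x) = 2 g(u, x\<inverse>)\<close>.\<close>

lemma trace_inv_Pop_Ppolar:
  assumes "detP x \<noteq> 0"
  shows "trace (matrix_inv (matrix (Pop mul x)) ** matrix (Ppolar x u)) = 2 * gform mul u (jinv mul x)"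
proof -
  let ?A = "matrix (Pop mul x)"
  define y where "y = matrix_inv ?A *v u"
  define W where "W z = Ppolar y z x" for z
  have Py: "Pop mul x y = u"
    unfolding y_def by (rule Pop_matrix_inv[OF assms])
  have "Ppolar x u = Pop mul x \<circ> W"
    using Ppolar_Pop[of x y] by (simp add: W_def Py fun_eq_iff)
  then have "matrix (Ppolar x u) = ?A ** matrix W"
    using matrix_compose[OF linear_Ppolar_middle linear_Pop] unfolding W_def by metis
  then have "matrix_inv ?A ** matrix (Ppolar x u) = matrix W"
    by (simp add: matrix_mul_assoc matrix_inv_det_nz(2)[OF assms])
  moreover have "trace (matrix W) = 2 * trL (mul y x)"
  proof -
    have "trace (matrix (mul y \<circ> mul x)) = trace (matrix (mul x \<circ> mul y))"
      by (intro trace_matrix_comp_commute linear_mul)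
    then show ?thesis
      unfolding W_def Ppolar_def trL_def trace_matrix_eq_sum
      by (simp add: sum.distrib sum_subtractf sum_distrib_left[symmetric] mul_commute)
  qed
  moreover have "gform mul y x = gform mul u (jinv mul x)"
    using gform_Pop_sym[of x y "jinv mul x"] by (simp add: Pop_jinv[OF assms] Py)
  ultimately show ?thesis
    by (simp add: gform_eq_trL)
qed

lemma detP_has_derivative:
  assumes "detP x \<noteq> 0"
  shows "(detP has_derivative (\<lambda>u. 2 * detP x * gform mul u (jinv mul x))) (at x)"
  using det_has_derivative[OF matrix_Pop_entry_has_derivative, of x]
  by (simp add: sum_det_replace_row[OF assms] trace_inv_Pop_Ppolar[OF assms] ac_simps)

lemma linear_gform_left: "linear (\<lambda>u. gform mul u w)"
  by (rule linearI) (simp_all add: gform_eq_trL mul_simps linear_add[OF linear_trL] linear_scale[OF linear_trL])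

lemma gform_eq_sum_axis: "gform mul u w = (\<Sum>i\<in>UNIV. u $ i * gform mul (axis i 1) w)"
proof -
  have "gform mul u w = gform mul (\<Sum>i\<in>UNIV. u $ i *\<^sub>R axis i 1) w"
    using basis_expansion[of u] by (simp add: scalar_mult_eq_scaleR)
  also have "\<dots> = (\<Sum>i\<in>UNIV. u $ i * gform mul (axis i 1) w)"
    by (simp add: linear_sum[OF linear_gform_left] linear_scale[OF linear_gform_left] o_def)
  finally show ?thesis .
qed

lemma continuous_on_gform_right: "continuous_on S (gform mul a)"
proof -
  have "gform mul a = (\<lambda>w. gform mul w a)"
    by (rule ext) (rule gform_sym)
  then show ?thesis
    using linear_gform_left[of a] by (simp add: linear_continuous_on linear_linear)
qed

end

section \<open>The component of the unit\<close>

locale unital_jordan = jordan mul for mul :: "real^'n \<Rightarrow> real^'n \<Rightarrow> real^'n" +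
  fixes e :: "real^'n"
  assumes unit_mul: "mul e x = x"
begin

abbreviation Y :: "(real^'n) set" where
  "Y \<equiv> Ycomp mul e"

lemma Ycomp_eq: "Y = connected_component_set {x. detP x \<noteq> 0} e"
  by (simp add: Ycomp_def jinvertible_def)

lemma open_Ycomp: "open Y"
  unfolding Ycomp_eq
  by (intro open_connected_component open_Collect_neq continuous_on_detP continuous_on_const)

lemma connected_Ycomp: "connected Y"
  unfolding Ycomp_eq by (rule connected_connected_component)

lemma detP_nonzero: "x \<in> Y \<Longrightarrow> detP x \<noteq> 0"
  using connected_component_subset unfolding Ycomp_eq by blast

lemma detP_unit: "detP e = 1"
proof -
  have "Pop mul e = id"
    by (rule ext) (simp add: Pop_apply unit_mul vec_eq_iff)
  then show ?thesis
    by (simp add: matrix_id_mat_1)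
qed

lemma unit_in_Ycomp: "e \<in> Y"
  unfolding Ycomp_eq using detP_unit by (simp add: connected_component_refl_eq)

lemma detP_scaleR: "detP (t *\<^sub>R x) = (t\<^sup>2) ^ CARD('n) * detP x"
proof -
  have "Pop mul (t *\<^sub>R x) = (*\<^sub>R) (t\<^sup>2) \<circ> Pop mul x"
    by (rule ext) (simp add: Pop_apply mul_simps power2_eq_square algebra_simps)
  then have "matrix (Pop mul (t *\<^sub>R x)) = matrix ((*\<^sub>R) (t\<^sup>2)) ** matrix (Pop mul x)"
    by (simp add: matrix_compose linear_Pop linear_scaleR)
  then show ?thesis
    by (simp add: det_mul)
qed

lemma detP_pos: "x \<in> Y \<Longrightarrow> detP x > 0"
proof (rule ccontr)
  assume x: "x \<in> Y" and "\<not> detP x > 0"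
  then have "detP x < 0"
    using detP_nonzero by force
  moreover have "connected (detP ` Y)"
    by (intro connected_continuous_image continuous_on_detP connected_Ycomp)
  ultimately have "0 \<in> detP ` Y"
    using x unit_in_Ycomp detP_unit unfolding connected_iff_interval
    by (metis image_eqI less_eq_real_def zero_le_one)
  then show False
    using detP_nonzero by auto
qed

lemma scaleR_in_Ycomp:
  assumes "x \<in> Y" "t > 0"
  shows "t *\<^sub>R x \<in> Y"
proof -
  let ?T = "(\<lambda>s. s *\<^sub>R x) ` {min 1 t .. max 1 t}"
  have "connected ?T"
    by (intro connected_continuous_image continuous_intros) (simp add: connected_Icc)
  moreover have "?T \<subseteq> {x. detP x \<noteq> 0}"
    using assms detP_nonzero by (auto simp: detP_scaleR)
  moreover have "x \<in> ?T"
    by (rule image_eqI[of _ _ 1]) auto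
  moreover have "t *\<^sub>R x \<in> ?T"
    by (rule image_eqI[of _ _ t]) auto
  ultimately have "t *\<^sub>R x \<in> connected_component_set {x. detP x \<noteq> 0} x"
    by (meson connected_component_maximal subsetD)
  then show ?thesis
    using assms(1) unfolding Ycomp_eq by (metis connected_component_eq)
qed

lemma omega_eq: "x \<in> Y \<Longrightarrow> omega mul x = sqrt (detP x)"
  using detP_pos by (simp add: omega_def abs_of_pos)

lemma omega_pos: "x \<in> Y \<Longrightarrow> omega mul x > 0"
  by (simp add: omega_eq detP_pos)

lemma omega_scaleR:
  assumes "t > 0"
  shows "omega mul (t *\<^sub>R x) = t ^ CARD('n) * omega mul x"
proof -
  have "(t\<^sup>2) ^ CARD('n) = (t ^ CARD('n))\<^sup>2"
    by (simp add: power_mult[symmetric] mult.commute)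
  then show ?thesis
    using assms by (simp add: omega_def detP_scaleR abs_mult real_sqrt_mult)
qed

lemma omega_has_derivative:
  assumes x: "x \<in> Y"
  shows "(omega mul has_derivative (\<lambda>u. omega mul x * gform mul u (jinv mul x))) (at x)"
proof -
  have "((\<lambda>y. sqrt (detP y)) has_derivative
      (\<lambda>u. 2 * detP x * gform mul u (jinv mul x) * (inverse (sqrt (detP x)) / 2))) (at x)"
    by (rule DERIV_compose_FDERIV[OF DERIV_real_sqrt[OF detP_pos[OF x]] detP_has_derivative[OF detP_nonzero[OF x]]])
  moreover have "2 * detP x * g * (inverse (sqrt (detP x)) / 2) = omega mul x * g" for g
  proof -
    have "2 * detP x * g * (inverse (sqrt (detP x)) / 2) = detP x / sqrt (detP x) * g"
      by (simp add: field_simps)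
    also have "detP x / sqrt (detP x) = omega mul x"
      using detP_pos[OF x] by (simp add: omega_eq[OF x] real_div_sqrt)
    finally show ?thesis .
  qed
  ultimately have "((\<lambda>y. sqrt (detP y)) has_derivative (\<lambda>u. omega mul x * gform mul u (jinv mul x))) (at x)"
    by (simp only:)
  then show ?thesis
    by (rule has_derivative_transform_within_open[OF _ open_Ycomp x]) (simp add: omega_eq)
qed

lemma continuous_on_omega: "continuous_on Y (omega mul)"
  using omega_has_derivative has_derivative_continuous continuous_at_imp_continuous_on by blast

lemma jinv_nonzero:
  assumes "detP x \<noteq> 0"
  shows "jinv mul x \<noteq> 0"
proof
  assume "jinv mul x = 0"
  then have "x = 0"
    using Pop_jinv[OF assms] by (simp add: Pop_apply mul_simps)
  moreover have "detP 0 = 0"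
    using detP_scaleR[of 0 0] by (simp add: power_0_left)
  ultimately show False
    using assms by simp
qed

lemma continuous_on_jinv: "continuous_on Y (jinv mul)"
proof -
  have "continuous_on S (\<lambda>x. det (\<chi> i j. if j = k then x $ i else matrix (Pop mul x) $ i $ j))" for S k
  proof (rule continuous_on_det)
    show "continuous_on S (\<lambda>x. (\<chi> i j. if j = k then x $ i else matrix (Pop mul x) $ i $ j) $ i $ j)" for i j
        by (cases "j = k") (simp_all add: continuous_on_matrix_Pop_entry continuous_on_component)
  qed
  then have "continuous_on Y (\<lambda>x. \<chi> k. det (\<chi> i j. if j = k then x $ i else matrix (Pop mul x) $ i $ j) / detP x)"
    using detP_nonzero by (intro continuous_intros continuous_on_detP) auto
  moreover have "(\<chi> k. det (\<chi> i j. if j = k then x $ i else matrix (Pop mul x) $ i $ j) / detP x) = jinv mul x"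
    if "x \<in> Y" for x
    using cramer[OF detP_nonzero[OF that]] Pop_jinv[OF detP_nonzero[OF that]]
    by (simp add: matrix_Pop_mult)
  ultimately show ?thesis
    by (rule continuous_on_eq)
qed

definition grad_omega :: "real^'n \<Rightarrow> real^'n" where
  "grad_omega x = (\<chi> i. omega mul x * gform mul (axis i 1) (jinv mul x))"

lemma inner_grad_omega: "u \<bullet> grad_omega x = omega mul x * gform mul u (jinv mul x)"
  by (simp add: grad_omega_def inner_vec_def gform_eq_sum_axis[of u] sum_distrib_left algebra_simps)

lemma omega_has_derivative_grad:
  "x \<in> Y \<Longrightarrow> (omega mul has_derivative blinfun_inner_left (grad_omega x)) (at x)"
  using omega_has_derivative by (simp add: inner_grad_omega)

lemma continuous_on_blinfun_grad_omega: "continuous_on Y (\<lambda>x. blinfun_inner_left (grad_omega x))"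
proof -
  have "continuous_on Y grad_omega"
    unfolding grad_omega_def
    by (intro continuous_intros continuous_on_omega
        continuous_on_compose2[OF continuous_on_gform_right continuous_on_jinv]) auto
  then show ?thesis
    by (rule continuous_on_compose2[OF linear_continuous_on[OF bounded_linear_blinfun_inner_left]]) auto
qed

lemma Delta_eq_kernel: "x \<in> Y \<Longrightarrow> Delta mul x = {u. blinfun_inner_left (grad_omega x) u = 0}"
  using omega_pos[of x]
  by (simp add: Delta_def zeta_def gamma_form_def inner_grad_omega)

lemma blinfun_grad_omega_nonzero:
  assumes "semisimple mul" and x: "x \<in> Y"
  shows "blinfun_inner_left (grad_omega x) \<noteq> 0"
proof
  assume grad0: "blinfun_inner_left (grad_omega x) = 0"
  obtain y where "gform mul (jinv mul x) y \<noteq> 0"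
    using assms(1) jinv_nonzero[OF detP_nonzero[OF x]] unfolding semisimple_def by blast
  then have "blinfun_inner_left (grad_omega x) y \<noteq> 0"
    using omega_pos[OF x] by (simp add: inner_grad_omega gform_sym)
  then show False
    using grad0 by simp
qed

lemma omega_image_Ycomp: "omega mul ` Y = {0<..}"
proof
  show "omega mul ` Y \<subseteq> {0<..}"
    using omega_pos by auto
  show "{0<..} \<subseteq> omega mul ` Y"
  proof
    fix c :: real
    assume "c \<in> {0<..}"
    then have r: "root CARD('n) c > 0" and "c > 0"
      by auto
    have "omega mul (root CARD('n) c *\<^sub>R e) = c"
      using omega_scaleR[OF r, of e] \<open>c > 0\<close> by (simp add: omega_def detP_unit)
    then show "c \<in> omega mul ` Y"
      using scaleR_in_Ycomp[OF unit_in_Ycomp r] by (metis image_eqI)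
  qed
qed

lemma connected_omega_level: "connected {x \<in> Y. omega mul x = c}"
proof (cases "c > 0")
  case True
  define \<rho> where "\<rho> x = root CARD('n) (c / omega mul x) *\<^sub>R x" for x
  have r: "root CARD('n) (c / omega mul x) > 0" if "x \<in> Y" for x
    using True omega_pos[OF that] by simp
  have "\<rho> ` Y = {x \<in> Y. omega mul x = c}"
  proof
    show "\<rho> ` Y \<subseteq> {x \<in> Y. omega mul x = c}"
    proof
      fix y
      assume "y \<in> \<rho> ` Y"
      then obtain x where x: "x \<in> Y" and y: "y = \<rho> x"
        by blast
      have "omega mul y = root CARD('n) (c / omega mul x) ^ CARD('n) * omega mul x"
        by (simp add: y \<rho>_def omega_scaleR[OF r[OF x]])
      also have "\<dots> = c"
        using True omega_pos[OF x] by (simp add: real_root_pow_pos2)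
      finally show "y \<in> {x \<in> Y. omega mul x = c}"
        using scaleR_in_Ycomp[OF x r[OF x]] by (simp add: y \<rho>_def)
    qed
    show "{x \<in> Y. omega mul x = c} \<subseteq> \<rho> ` Y"
    proof
      fix x
      assume x: "x \<in> {x \<in> Y. omega mul x = c}"
      then have "\<rho> x = x"
        using True by (simp add: \<rho>_def)
      then show "x \<in> \<rho> ` Y"
        using x by (metis (no_types, lifting) image_eqI mem_Collect_eq)
    qed
  qed
  moreover have "continuous_on Y \<rho>"
    unfolding \<rho>_def by (intro continuous_intros continuous_on_omega) (auto dest: omega_pos)
  ultimately show ?thesis
    by (metis connected_continuous_image connected_Ycomp)
next
  case False
  then have "{x \<in> Y. omega mul x = c} = {}"
    using omega_pos by force
  then show ?thesis
    by (simp only: connected_empty)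
qed

end

theorem lemma4p10:
  fixes mul :: "real^'n \<Rightarrow> real^'n \<Rightarrow> real^'n" and e :: "real^'n"
  assumes "CARD('n) \<ge> 2"
    and "jordan_algebra mul"
    and "semisimple mul"
    and "\<forall>x. mul e x = x"
  shows "{S. maximal_integral_manifold (Delta mul) (Ycomp mul e) S}
       = {{x \<in> Ycomp mul e. omega mul x = c} | c. c > 0}"
proof -
  interpret unital_jordan mul e
    using assms(2,4) by unfold_locales auto
  have "{S. maximal_integral_manifold (Delta mul) Y S} = {{x \<in> Y. omega mul x = c} | c. c \<in> omega mul ` Y}"
    by (rule maximal_integral_manifolds_eq_level_sets[OF open_Ycomp omega_has_derivative_grad
          continuous_on_blinfun_grad_omega blinfun_grad_omega_nonzero[OF assms(3)] Delta_eq_kernel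
          connected_omega_level])
  then show ?thesis
    by (simp add: omega_image_Ycomp)
qed

end
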